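(* Assume the Perturbed Composite Setting (see context). Suppose $\varepsilon\le\mu^2/(14\rho)$, let $\widetilde{\mathcal{T}}_1:=\{z\in\mathcal{X}:\frac{14\varepsilon}{\mu}<\mathrm{dist}(z,\mathcal{X}^* )<\frac{\mu}{4\rho}\}$, $\tilde L:=\sup\{\|\zeta\|:\zeta\in\partial\tilde f(x),x\in\widetilde{\mathcal{T}}_1\}$ (assumed finite) and $\tilde\tau=\mu/\tilde L$. Run the modified Polyak method: given $x_k$ choose $\zeta_k\in\partial\tilde f(x_k)$; if $\zeta_k=0$ stop, otherwise $x_{k+1}=\mathrm{proj}_{\mathcal{X}}\big(x_k-\frac{\tilde f(x_k)-\min_{\mathcal{X}}f}{\|\zeta_k\|^2}\zeta_k\big)$, starting from $x_0\in\widetilde{\mathcal{T}}_1$. Let $K$ be the first index with $\mathrm{dist}(x_K,\mathcal{X}^* )\le14\varepsilon/\mu$ ($K=\infty$ if there is none). Then the method does not stop before $K$, $x_k\in\widetilde{\mathcal{T}}_1$ for all $0\le k<K$, and $$\mathrm{dist}^2(x_{k+1},\mathcal{X}^* )\le\Big(1-\frac{13\tilde\tau^2}{56}\Big)\mathrm{dist}^2(x_k,\mathcal{X}^* )\quad\text{for all }0\le k<K.$$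
   Context: Perturbed Composite Setting: $\mathbf{E},\mathbf{Y}$ are Euclidean spaces ($\|\cdot\|$ the Euclidean norm on $\mathbf{E}$), $\mathcal{X}\subset\mathbf{E}$ nonempty closed convex, $F\colon\mathbf{E}\to\mathbf{Y}$ continuously differentiable with Jacobian $\nabla F(x)$, $h\colon\mathbf{Y}\to\mathbb{R}$ convex and $\eta$-Lipschitz with respect to a norm $|||\cdot|||$ on $\mathbf{Y}$. Set $f=h\circ F$, $f_x(y)=h(F(x)+\nabla F(x)(y-x))$, and assume $\mathcal{X}^*:=\operatorname{argmin}_{\mathcal{X}}f\ne\emptyset$ and constants $\mu,\rho>0$ with $|f(y)-f_x(y)|\le\frac\rho2\|y-x\|^2$ for all $x,y\in\mathcal{X}$ and $f(x)-\min_{\mathcal{X}}f\ge\mu\,\mathrm{dist}(x,\mathcal{X}^* )$ for all $x\in\mathcal{X}$. Fix $e\in\mathbf{Y}$ and set $\tilde f(x)=h(F(x)+e)$, $\varepsilon:=\eta|||e|||$, and $\partial\tilde f(x):=\nabla F(x)^*\partial h(F(x)+e)$ (convex subdifferential of $h$). $\mathrm{proj}_{\mathcal{X}}$ is the Euclidean projection and $\mathrm{dist}$ the Euclidean distance. *)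

theory Defs
  imports "HOL-Analysis.Analysis"
begin

definition is_norm :: "('b::real_vector \<Rightarrow> real) \<Rightarrow> bool" where
  "is_norm N \<longleftrightarrow> (\<forall>u. N u \<ge> 0) \<and> (\<forall>u. N u = 0 \<longleftrightarrow> u = 0)
     \<and> (\<forall>c u. N (scaleR c u) = \<bar>c\<bar> * N u) \<and> (\<forall>u v. N (u + v) \<le> N u + N v)"

definition argmin_on :: "('a \<Rightarrow> real) \<Rightarrow> 'a set \<Rightarrow> 'a set" where
  "argmin_on f X = {x \<in> X. \<forall>y \<in> X. f x \<le> f y}"

definition convex_subdiff :: "('b::real_inner \<Rightarrow> real) \<Rightarrow> 'b \<Rightarrow> 'b set" where
  "convex_subdiff h u = {g. \<forall>z. h z \<ge> h u + inner g (z - u)}"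

definition pert_subdiff ::
  "('b::euclidean_space \<Rightarrow> real) \<Rightarrow> ('a::euclidean_space \<Rightarrow> 'b) \<Rightarrow> ('a \<Rightarrow> 'a \<Rightarrow> 'b) \<Rightarrow> 'b \<Rightarrow> 'a \<Rightarrow> 'a set" where
  "pert_subdiff h F F' e x = adjoint (F' x) ` convex_subdiff h (F x + e)"

end

theory Submission
  imports Defs
begin

text \<open>Inside the tube the perturbed gap \<open>a = f\<^sup>~(z) - min f\<close> is at least \<open>\<mu> d - \<epsilon>\<close> by sharpness,
  and a subgradient \<open>g\<close> satisfies \<open>\<langle>g, z - z\<^sup>*\<rangle> \<ge> a - \<rho> d\<^sup>2/2 - \<epsilon>\<close> for a nearest minimizer \<open>z\<^sup>*\<close>
  by the two-sided model bound. Since the Euclidean projection onto \<open>X\<close> is nonexpansive and fixes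
  \<open>z\<^sup>*\<close>, the Polyak step with step length \<open>a/\<parallel>g\<parallel>\<^sup>2\<close> decreases the squared distance by
  \<open>(2 a \<langle>g, z - z\<^sup>*\<rangle> - a\<^sup>2)/\<parallel>g\<parallel>\<^sup>2 \<ge> a (a - \<rho> d\<^sup>2 - 2\<epsilon>)/\<parallel>g\<parallel>\<^sup>2\<close>. Because \<open>14\<epsilon> < \<mu> d\<close> and
  \<open>4\<rho> d < \<mu>\<close>, the two factors are at least \<open>(13/14) \<mu> d\<close> and \<open>(15/28) \<mu> d\<close>, so the decrease is at
  least \<open>(195/392) \<mu>\<^sup>2 d\<^sup>2/\<parallel>g\<parallel>\<^sup>2 \<ge> (13/56) \<tau>\<^sup>2 d\<^sup>2\<close>; in particular the distance never grows, so the
  iterates stay in the tube until they first enter the \<open>14\<epsilon>/\<mu>\<close>-neighbourhood of the minimizers.\<close>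

lemma norm_diff_scaleR_power2:
  fixes u g :: "'a::real_inner"
  shows "(norm (u - t *\<^sub>R g))\<^sup>2 = (norm u)\<^sup>2 - 2 * t * inner g u + t\<^sup>2 * (norm g)\<^sup>2"
  unfolding power2_norm_eq_inner
  by (simp add: inner_diff_left inner_diff_right inner_commute algebra_simps power2_eq_square)

lemma polyak_step_dist_power2:
  fixes z y g :: "'a::real_inner"
  assumes "g \<noteq> 0"
  shows "(dist (z - (a / (norm g)\<^sup>2) *\<^sub>R g) y)\<^sup>2
           = (dist z y)\<^sup>2 - (2 * a * inner g (z - y) - a\<^sup>2) / (norm g)\<^sup>2"
proof -
  have "(dist (z - (a / (norm g)\<^sup>2) *\<^sub>R g) y)\<^sup>2 = (norm ((z - y) - (a / (norm g)\<^sup>2) *\<^sub>R g))\<^sup>2"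
    by (simp add: dist_norm algebra_simps)
  also have "\<dots> = (norm (z - y))\<^sup>2 - 2 * (a / (norm g)\<^sup>2) * inner g (z - y)
                    + (a / (norm g)\<^sup>2)\<^sup>2 * (norm g)\<^sup>2"
    by (rule norm_diff_scaleR_power2)
  also have "\<dots> = (dist z y)\<^sup>2 - (2 * a * inner g (z - y) - a\<^sup>2) / (norm g)\<^sup>2"
    using assms by (simp add: dist_norm field_simps power2_eq_square)
  finally show ?thesis .
qed

lemma infdist_closest_point_le:
  fixes X S :: "'a::euclidean_space set"
  assumes "closed X" "convex X" "S \<subseteq> X" "y \<in> S"
  shows "infdist (closest_point X p) S \<le> dist p y"
proof -
  have "y \<in> X" using assms by auto
  have "infdist (closest_point X p) S \<le> dist (closest_point X p) (closest_point X y)"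
    using infdist_le[OF \<open>y \<in> S\<close>] closest_point_self[OF \<open>y \<in> X\<close>] by simp
  also have "\<dots> \<le> dist p y"
    using closest_point_lipschitz[OF \<open>convex X\<close> \<open>closed X\<close>] \<open>y \<in> X\<close> by blast
  finally show ?thesis .
qed

lemma polyak_gain_ge:
  fixes a s d \<epsilon> \<mu> \<rho> :: real
  assumes "0 < \<mu>" "0 \<le> \<epsilon>" "14 * \<epsilon> < \<mu> * d" "4 * \<rho> * d < \<mu>"
    and a: "\<mu> * d - \<epsilon> \<le> a" and s: "a - \<rho> / 2 * d\<^sup>2 - \<epsilon> \<le> s"
  shows "195 / 392 * (\<mu> * d)\<^sup>2 \<le> 2 * a * s - a\<^sup>2"
proof -
  have "0 < \<mu> * d" using assms by linarith
  then have "0 < d" using \<open>0 < \<mu>\<close> by (simp add: zero_less_mult_iff)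
  then have "4 * \<rho> * d * d \<le> \<mu> * d" using assms by (simp add: mult_right_mono)
  then have \<rho>d: "\<rho> * d\<^sup>2 \<le> \<mu> * d / 4" by (simp add: power2_eq_square)
  have a_ge: "13 / 14 * (\<mu> * d) \<le> a" using a assms by linarith
  have "15 / 28 * (\<mu> * d) \<le> a - \<rho> * d\<^sup>2 - 2 * \<epsilon>" using a_ge \<rho>d assms by linarith
  with a_ge \<open>0 < \<mu> * d\<close>
  have "(13 / 14 * (\<mu> * d)) * (15 / 28 * (\<mu> * d)) \<le> a * (a - \<rho> * d\<^sup>2 - 2 * \<epsilon>)"
    by (intro mult_mono) auto
  also have "\<dots> \<le> 2 * a * s - a\<^sup>2"
  proof -
    have "2 * a * (a - \<rho> / 2 * d\<^sup>2 - \<epsilon>) \<le> 2 * a * s"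
      using s a_ge \<open>0 < \<mu> * d\<close> by (intro mult_left_mono) auto
    then show ?thesis by (simp add: algebra_simps power2_eq_square)
  qed
  finally show ?thesis by (simp add: power2_eq_square)
qed

lemma polyak_rate_le:
  fixes n L \<mu> d :: real
  assumes "0 < n" "n \<le> L"
  shows "d\<^sup>2 - 195 / 392 * (\<mu> * d)\<^sup>2 / n\<^sup>2 \<le> (1 - 13 * (\<mu> / L)\<^sup>2 / 56) * d\<^sup>2"
proof -
  have "(\<mu> * d)\<^sup>2 / L\<^sup>2 \<le> (\<mu> * d)\<^sup>2 / n\<^sup>2"
    using assms by (intro divide_left_mono power_mono) auto
  moreover have "0 \<le> (\<mu> * d)\<^sup>2 / n\<^sup>2" by simp
  moreover have "(1 - 13 * (\<mu> / L)\<^sup>2 / 56) * d\<^sup>2 = d\<^sup>2 - 13 / 56 * ((\<mu> * d)\<^sup>2 / L\<^sup>2)"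
    by (simp add: power_divide power_mult_distrib algebra_simps)
  ultimately show ?thesis by linarith
qed

lemma pert_subdiff_inner_ge:
  assumes "linear (F' z)" "g \<in> pert_subdiff h F F' e z"
    and shift: "\<And>u. \<bar>h (u + e) - h u\<bar> \<le> \<epsilon>"
    and model: "\<bar>h (F y) - h (F z + F' z (y - z))\<bar> \<le> \<rho> / 2 * (norm (y - z))\<^sup>2"
  shows "h (F z + e) - h (F y) - \<rho> / 2 * (norm (y - z))\<^sup>2 - \<epsilon> \<le> inner g (z - y)"
proof -
  obtain v where v: "v \<in> convex_subdiff h (F z + e)" and g: "g = adjoint (F' z) v"
    using assms(2) unfolding pert_subdiff_def by blast
  define w where "w = F' z (y - z)"
  have "h (F z + e) + inner v w \<le> h (F z + e + w)"
    using v unfolding convex_subdiff_def by (auto dest: spec[of _ "F z + e + w"])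
  moreover have "inner v w = - inner g (z - y)"
    unfolding g w_def using adjoint_works[OF assms(1), of "y - z" v]
    by (metis inner_commute inner_minus_left minus_diff_eq)
  moreover have "h (F z + w + e) \<le> h (F z + w) + \<epsilon>" using shift[of "F z + w"] by linarith
  moreover have "h (F z + w) \<le> h (F y) + \<rho> / 2 * (norm (y - z))\<^sup>2"
    using model unfolding w_def by linarith
  ultimately show ?thesis by (simp add: algebra_simps)
qed

lemma lipschitz_wrt_norm_const_nonneg:
  fixes h :: "'b::euclidean_space \<Rightarrow> real"
  assumes "is_norm N" "\<forall>u v. \<bar>h u - h v\<bar> \<le> \<eta> * N (u - v)"
  shows "0 \<le> \<eta>"
proof -
  obtain b :: 'b where "b \<in> Basis" using nonempty_Basis by blast
  then have "0 < N b" using assms(1) unfolding is_norm_def by (metis order_le_less nonzero_Basis)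
  moreover have "0 \<le> \<eta> * N b" using assms(2)[rule_format, of b 0] by simp
  ultimately show ?thesis by (simp add: zero_le_mult_iff)
qed

locale perturbed_composite =
  fixes X :: "'a::euclidean_space set"
    and F :: "'a \<Rightarrow> 'b::euclidean_space"
    and F' :: "'a \<Rightarrow> 'a \<Rightarrow> 'b"
    and h :: "'b \<Rightarrow> real"
    and N :: "'b \<Rightarrow> real"
    and \<eta> \<mu> \<rho> :: real
    and e :: 'b
  assumes X_closed: "closed X" and X_convex: "convex X"
    and F_deriv: "\<forall>z. (F has_derivative F' z) (at z)"
    and h_convex: "convex_on UNIV h"
    and N_norm: "is_norm N"
    and h_lip: "\<forall>u v. \<bar>h u - h v\<bar> \<le> \<eta> * N (u - v)"
    and Xstar_ne: "argmin_on (\<lambda>z. h (F z)) X \<noteq> {}"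
    and mu_pos: "\<mu> > 0" and rho_pos: "\<rho> > 0"
    and weak: "\<forall>z\<in>X. \<forall>y\<in>X. \<bar>h (F y) - h (F z + F' z (y - z))\<bar> \<le> \<rho> / 2 * (norm (y - z))\<^sup>2"
    and sharp: "\<forall>z\<in>X. h (F z) - Inf ((\<lambda>y. h (F y)) ` X)
                   \<ge> \<mu> * infdist z (argmin_on (\<lambda>y. h (F y)) X)"
begin

definition Xstar :: "'a set" where "Xstar = argmin_on (\<lambda>y. h (F y)) X"

definition fmin :: real where "fmin = Inf ((\<lambda>y. h (F y)) ` X)"

definition pert_eps :: real where "pert_eps = \<eta> * N e"

definition tube :: "'a set" where
  "tube = {z \<in> X. 14 * pert_eps / \<mu> < infdist z Xstar \<and> infdist z Xstar < \<mu> / (4 * \<rho>)}"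

definition polyak_step :: "'a \<Rightarrow> 'a \<Rightarrow> 'a" where
  "polyak_step z g = closest_point X (z - ((h (F z + e) - fmin) / (norm g)\<^sup>2) *\<^sub>R g)"

lemma Xstar_subset: "Xstar \<subseteq> X"
  unfolding Xstar_def argmin_on_def by auto

lemma Xstar_nonempty: "Xstar \<noteq> {}"
  using Xstar_ne unfolding Xstar_def .

lemma fmin_eq: "y \<in> Xstar \<Longrightarrow> h (F y) = fmin"
  unfolding fmin_def Xstar_def argmin_on_def by (rule cInf_eq_minimum[symmetric]) auto

lemma closed_Xstar: "closed Xstar"
proof -
  obtain y where "y \<in> X" and y_min: "\<forall>z\<in>X. h (F y) \<le> h (F z)"
    using Xstar_ne unfolding argmin_on_def by blast
  have "continuous_on UNIV h" using h_convex by (intro convex_on_continuous) auto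
  moreover have "continuous_on UNIV F"
    using F_deriv has_derivative_continuous continuous_at_imp_continuous_on by blast
  ultimately have hF: "continuous_on UNIV (\<lambda>z. h (F z))" by (rule continuous_on_compose2) auto
  have Xstar_eq: "Xstar = X \<inter> {z. h (F z) \<le> h (F y)}"
    using \<open>y \<in> X\<close> y_min unfolding Xstar_def argmin_on_def by (auto intro: order_trans)
  show ?thesis unfolding Xstar_eq
    by (intro closed_Int X_closed closed_Collect_le hF continuous_on_const)
qed

lemma pert_eps_nonneg: "0 \<le> pert_eps"
  using lipschitz_wrt_norm_const_nonneg[OF N_norm h_lip] N_norm
  unfolding pert_eps_def is_norm_def by simp

lemma shift_bound: "\<bar>h (u + e) - h u\<bar> \<le> pert_eps"
  using h_lip[rule_format, of "u + e" u] unfolding pert_eps_def by simp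

lemma perturbed_gap_ge:
  assumes "z \<in> X"
  shows "\<mu> * infdist z Xstar - pert_eps \<le> h (F z + e) - fmin"
proof -
  have "\<mu> * infdist z Xstar \<le> h (F z) - fmin"
    using sharp assms unfolding fmin_def Xstar_def by simp
  moreover have "h (F z) \<le> h (F z + e) + pert_eps" using shift_bound[of "F z"] by linarith
  ultimately show ?thesis by linarith
qed

lemma polyak_step_descent:
  assumes z: "z \<in> tube" and g: "g \<in> pert_subdiff h F F' e z"
  shows "g \<noteq> 0"
    and "(infdist (polyak_step z g) Xstar)\<^sup>2
           \<le> (infdist z Xstar)\<^sup>2 - 195 / 392 * (\<mu> * infdist z Xstar)\<^sup>2 / (norm g)\<^sup>2"
proof -
  define d where "d = infdist z Xstar"
  define a where "a = h (F z + e) - fmin"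
  have "z \<in> X" "14 * pert_eps < \<mu> * d" "4 * \<rho> * d < \<mu>"
    using z mu_pos rho_pos unfolding tube_def d_def by (auto simp: field_simps)
  obtain y where y: "y \<in> Xstar" and dy: "d = dist z y"
    using infdist_attains_inf[OF closed_Xstar Xstar_nonempty] unfolding d_def by blast
  define s where "s = inner g (z - y)"
  have "y \<in> X" using y Xstar_subset by blast
  have "linear (F' z)" using F_deriv has_derivative_linear by blast
  then have "h (F z + e) - h (F y) - \<rho> / 2 * (norm (y - z))\<^sup>2 - pert_eps \<le> inner g (z - y)"
    using weak \<open>z \<in> X\<close> \<open>y \<in> X\<close> by (intro pert_subdiff_inner_ge[OF _ g shift_bound]) auto
  moreover have "norm (y - z) = d" by (simp add: dy dist_norm norm_minus_commute)
  ultimately have "a - \<rho> / 2 * d\<^sup>2 - pert_eps \<le> s"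
    unfolding a_def s_def fmin_eq[OF y] by simp
  then have gain: "195 / 392 * (\<mu> * d)\<^sup>2 \<le> 2 * a * s - a\<^sup>2"
    using polyak_gain_ge[OF mu_pos pert_eps_nonneg \<open>14 * pert_eps < \<mu> * d\<close> \<open>4 * \<rho> * d < \<mu>\<close>]
      perturbed_gap_ge[OF \<open>z \<in> X\<close>] unfolding a_def d_def by blast
  have "0 < \<mu> * d" using \<open>14 * pert_eps < \<mu> * d\<close> pert_eps_nonneg by linarith
  show "g \<noteq> 0"
  proof
    assume "g = 0"
    then have "2 * a * s - a\<^sup>2 \<le> 0" unfolding s_def by simp
    moreover have "0 < (\<mu> * d)\<^sup>2" using \<open>0 < \<mu> * d\<close> by (rule zero_less_power)
    ultimately show False using gain by linarith
  qed
  have "infdist (polyak_step z g) Xstar \<le> dist (z - (a / (norm g)\<^sup>2) *\<^sub>R g) y"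
    unfolding polyak_step_def a_def
    by (rule infdist_closest_point_le[OF X_closed X_convex Xstar_subset y])
  then have "(infdist (polyak_step z g) Xstar)\<^sup>2 \<le> (dist (z - (a / (norm g)\<^sup>2) *\<^sub>R g) y)\<^sup>2"
    by (simp add: power_mono infdist_nonneg)
  also have "\<dots> = d\<^sup>2 - (2 * a * s - a\<^sup>2) / (norm g)\<^sup>2"
    unfolding polyak_step_dist_power2[OF \<open>g \<noteq> 0\<close>] s_def dy ..
  also have "\<dots> \<le> d\<^sup>2 - 195 / 392 * (\<mu> * d)\<^sup>2 / (norm g)\<^sup>2"
    using divide_right_mono[OF gain, of "(norm g)\<^sup>2"] by simp
  finally show "(infdist (polyak_step z g) Xstar)\<^sup>2
                  \<le> (infdist z Xstar)\<^sup>2 - 195 / 392 * (\<mu> * infdist z Xstar)\<^sup>2 / (norm g)\<^sup>2"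
    unfolding d_def .
qed

lemma polyak_step_mem: "polyak_step z g \<in> X"
  unfolding polyak_step_def using closest_point_in_set[OF X_closed] Xstar_nonempty Xstar_subset
  by blast

lemma polyak_step_infdist_le:
  assumes "z \<in> tube" "g \<in> pert_subdiff h F F' e z"
  shows "infdist (polyak_step z g) Xstar \<le> infdist z Xstar"
proof -
  have "0 \<le> 195 / 392 * (\<mu> * infdist z Xstar)\<^sup>2 / (norm g)\<^sup>2" by simp
  then have "(infdist (polyak_step z g) Xstar)\<^sup>2 \<le> (infdist z Xstar)\<^sup>2"
    using polyak_step_descent(2)[OF assms] by linarith
  then show ?thesis using infdist_nonneg power2_le_imp_le by blast
qed

lemma polyak_iterates_in_tube:
  assumes x0: "x 0 \<in> tube"
    and zeta: "\<forall>k. \<zeta> k \<in> pert_subdiff h F F' e (x k)"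
    and step: "\<forall>k. \<zeta> k \<noteq> 0 \<longrightarrow> x (Suc k) = polyak_step (x k) (\<zeta> k)"
  shows "(\<forall>j\<le>k. 14 * pert_eps / \<mu> < infdist (x j) Xstar) \<Longrightarrow> x k \<in> tube"
proof (induction k)
  case 0
  then show ?case using x0 by simp
next
  case (Suc k)
  then have xk: "x k \<in> tube" by simp
  then have "x (Suc k) = polyak_step (x k) (\<zeta> k)"
    using step zeta polyak_step_descent(1) by blast
  then have "x (Suc k) \<in> X" "infdist (x (Suc k)) Xstar \<le> infdist (x k) Xstar"
    using polyak_step_mem polyak_step_infdist_le[OF xk] zeta by simp_all
  then show ?case using Suc.prems xk unfolding tube_def by fastforce
qed

end

theorem theorem9p5:
  fixes X :: "'a::euclidean_space set"
    and F :: "'a \<Rightarrow> 'b::euclidean_space"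
    and F' :: "'a \<Rightarrow> 'a \<Rightarrow> 'b"
    and h :: "'b \<Rightarrow> real"
    and N :: "'b \<Rightarrow> real"
    and \<eta> \<mu> \<rho> :: real
    and e :: 'b
    and x \<zeta> :: "nat \<Rightarrow> 'a"
  assumes X_ne: "X \<noteq> {}" and X_closed: "closed X" and X_convex: "convex X"
    and F_deriv: "\<forall>z. (F has_derivative F' z) (at z)"
    and F_C1: "continuous_on UNIV (\<lambda>z. Blinfun (F' z))"
    and h_convex: "convex_on UNIV h"
    and N_norm: "is_norm N"
    and h_lip: "\<forall>u v. \<bar>h u - h v\<bar> \<le> \<eta> * N (u - v)"
    and Xstar_ne: "argmin_on (\<lambda>z. h (F z)) X \<noteq> {}"
    and mu_pos: "\<mu> > 0" and rho_pos: "\<rho> > 0"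
    and weak: "\<forall>z\<in>X. \<forall>y\<in>X. \<bar>h (F y) - h (F z + F' z (y - z))\<bar> \<le> \<rho> / 2 * (norm (y - z))\<^sup>2"
    and sharp: "\<forall>z\<in>X. h (F z) - Inf ((\<lambda>y. h (F y)) ` X)
                   \<ge> \<mu> * infdist z (argmin_on (\<lambda>y. h (F y)) X)"
    and eps_small: "\<eta> * N e \<le> \<mu>\<^sup>2 / (14 * \<rho>)"
    and L_fin: "bdd_above {norm g | g z. g \<in> pert_subdiff h F F' e z \<and> z \<in> X \<and>
                  14 * (\<eta> * N e) / \<mu> < infdist z (argmin_on (\<lambda>y. h (F y)) X) \<and>
                  infdist z (argmin_on (\<lambda>y. h (F y)) X) < \<mu> / (4 * \<rho>)}"
    and x0: "x 0 \<in> X"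
            "14 * (\<eta> * N e) / \<mu> < infdist (x 0) (argmin_on (\<lambda>y. h (F y)) X)"
            "infdist (x 0) (argmin_on (\<lambda>y. h (F y)) X) < \<mu> / (4 * \<rho>)"
    and zeta_sub: "\<forall>k. \<zeta> k \<in> pert_subdiff h F F' e (x k)"
    and step: "\<forall>k. \<zeta> k \<noteq> 0 \<longrightarrow>
                 x (Suc k) = closest_point X
                   (x k - ((h (F (x k) + e) - Inf ((\<lambda>y. h (F y)) ` X)) / (norm (\<zeta> k))\<^sup>2) *\<^sub>R \<zeta> k)"
  shows "let \<epsilon> = \<eta> * N e;
             Xs = argmin_on (\<lambda>y. h (F y)) X;
             T1 = {z \<in> X. 14 * \<epsilon> / \<mu> < infdist z Xs \<and> infdist z Xs < \<mu> / (4 * \<rho>)};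
             L = Sup {norm g | g z. g \<in> pert_subdiff h F F' e z \<and> z \<in> T1};
             \<tau> = \<mu> / L
         in \<forall>k. (\<forall>j\<le>k. infdist (x j) Xs > 14 * \<epsilon> / \<mu>) \<longrightarrow>
               \<zeta> k \<noteq> 0 \<and> x k \<in> T1 \<and>
               (infdist (x (Suc k)) Xs)\<^sup>2 \<le> (1 - 13 * \<tau>\<^sup>2 / 56) * (infdist (x k) Xs)\<^sup>2"
proof -
  interpret perturbed_composite X F F' h N \<eta> \<mu> \<rho> e
    using assms by unfold_locales auto
  define L where "L = Sup {norm g | g z. g \<in> pert_subdiff h F F' e z \<and> z \<in> tube}"
  have "x 0 \<in> tube" using x0 unfolding tube_def Xstar_def pert_eps_def by simp
  moreover have step': "\<forall>k. \<zeta> k \<noteq> 0 \<longrightarrow> x (Suc k) = polyak_step (x k) (\<zeta> k)"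
    using step unfolding polyak_step_def fmin_def .
  ultimately have tube_k: "x k \<in> tube" if "\<forall>j\<le>k. 14 * pert_eps / \<mu> < infdist (x j) Xstar" for k
    using polyak_iterates_in_tube zeta_sub that by blast
  have "\<zeta> k \<noteq> 0 \<and> x k \<in> tube \<and>
          (infdist (x (Suc k)) Xstar)\<^sup>2 \<le> (1 - 13 * (\<mu> / L)\<^sup>2 / 56) * (infdist (x k) Xstar)\<^sup>2"
    if "\<forall>j\<le>k. 14 * pert_eps / \<mu> < infdist (x j) Xstar" for k
  proof -
    have xk: "x k \<in> tube" using tube_k that .
    note descent = polyak_step_descent[OF xk zeta_sub[rule_format, of k]]
    have "norm (\<zeta> k) \<le> L"
      unfolding L_def using xk zeta_sub L_fin
      by (intro cSup_upper) (auto simp: tube_def Xstar_def pert_eps_def)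
    moreover have "x (Suc k) = polyak_step (x k) (\<zeta> k)" using step' descent(1) by blast
    ultimately show ?thesis
      using xk descent polyak_rate_le[of "norm (\<zeta> k)" L "infdist (x k) Xstar" \<mu>]
      by (simp del: times_divide_eq_left)
  qed
  then show ?thesis
    unfolding Let_def L_def tube_def Xstar_def pert_eps_def by blast
qed

end
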